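(* Let $X$ and $Z$ be $T_1$-spaces with $\mathcal{D}(X)=\mathcal{D}(Z)$. Then $i(X)=i(Z)$. In particular, if $X$ is a $T_1$-space and no card of $X$ has an isolated point, then $X$ has no isolated point.
   Context: $i(X)$ denotes the cardinal number of isolated points of $X$. For a topological space $X$ and $x \in X$, the set $X\setminus\{x\}$ carries the subspace topology. A card of $X$ is a space homeomorphic to $X \setminus \{x\}$ for some $x \in X$. The deck of $X$ is $\mathcal{D}(X)=\{[X\setminus\{x\}]_\sim : x \in X\}$, where $[Y]_\sim$ denotes the homeomorphism class of $Y$. *)

theory Defs
  imports "HOL-Analysis.Analysis" "HOL-Library.Equipollence"
begin

text \<open>The set of isolated points of a space X; i(X) is its cardinality (compared via eqpoll).\<close>
definition isolated_points :: "'a topology \<Rightarrow> 'a set" where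
  "isolated_points X = {x \<in> topspace X. openin X {x}}"

definition card_of_space :: "'a topology \<Rightarrow> 'a \<Rightarrow> 'a topology" where
  "card_of_space X x = subtopology X (topspace X - {x})"

text \<open>Equality of decks (sets of homeomorphism classes of cards), unfolded:
  every card of X is homeomorphic to some card of Z and vice versa.\<close>
definition same_deck :: "'a topology \<Rightarrow> 'b topology \<Rightarrow> bool" where
  "same_deck X Z \<longleftrightarrow>
     (\<forall>x\<in>topspace X. \<exists>z\<in>topspace Z. card_of_space X x homeomorphic_space card_of_space Z z) \<and>
     (\<forall>z\<in>topspace Z. \<exists>x\<in>topspace X. card_of_space X x homeomorphic_space card_of_space Z z)"

end

theory Submission
  imports Defs
begin

text \<open>In a \<open>T\<^sub>1\<close>-space the isolated points of the card \<open>X - {x}\<close> are exactly the isolated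
  points of \<open>X\<close> other than \<open>x\<close>, and homeomorphisms preserve isolated points. So equal
  decks pair each \<open>I - {x}\<close> (\<open>I\<close> the isolated points of \<open>X\<close>) with an equipollent
  \<open>J - {z}\<close>, the two cards being empty together. If \<open>I\<close> is infinite, \<open>I - {x} \<approx> I\<close>
  settles the matter. If \<open>I\<close> is finite and nonempty, removing an isolated point gives
  \<open>|J| \<le> |I|\<close>; the only delicate configuration, one isolated point against none, is ruled
  out by comparing which cards are empty.\<close>

text \<open>The part of a matching of decks that the argument uses, recorded on the point sets
  \<open>S\<close>, \<open>T\<close> and the sets \<open>A\<close>, \<open>B\<close> of isolated points.\<close>

definition punctures_matched :: "'a set \<Rightarrow> 'a set \<Rightarrow> 'b set \<Rightarrow> 'b set \<Rightarrow> bool" where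
  "punctures_matched S A T B \<longleftrightarrow>
     (\<forall>x\<in>S. \<exists>z\<in>T. A - {x} \<approx> B - {z} \<and> (S - {x} = {} \<longleftrightarrow> T - {z} = {}))"

lemma punctures_matchedE:
  assumes "punctures_matched S A T B" "x \<in> S"
  obtains z where "z \<in> T" "A - {x} \<approx> B - {z}" "S - {x} = {} \<longleftrightarrow> T - {z} = {}"
  using assms unfolding punctures_matched_def by metis

lemma isolated_points_subset_topspace: "isolated_points X \<subseteq> topspace X"
  by (auto simp: isolated_points_def)

lemma isolated_points_singleton_space:
  assumes "topspace X = {a}"
  shows "isolated_points X = {a}"
  using assms openin_topspace[of X] by (auto simp: isolated_points_def)

lemma isolated_points_card_of_space:
  assumes "t1_space X"
  shows "isolated_points (card_of_space X x) = isolated_points X - {x}"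
proof (intro equalityI subsetI)
  fix y assume y: "y \<in> isolated_points (card_of_space X x)"
  then obtain U where U: "openin X U" "{y} = U \<inter> (topspace X - {x})"
    by (auto simp: isolated_points_def card_of_space_def openin_subtopology)
  have "{y} = U - {x}"
    using U openin_subset[OF U(1)] by blast
  moreover have "openin X (U - {x})"
    using assms U(1) t1_space_openin_delete_alt by metis
  ultimately show "y \<in> isolated_points X - {x}"
    using y by (auto simp: isolated_points_def card_of_space_def)
next
  fix y assume "y \<in> isolated_points X - {x}"
  then have "openin X {y}" "{y} = {y} \<inter> (topspace X - {x})"
    by (auto simp: isolated_points_def)
  then show "y \<in> isolated_points (card_of_space X x)"
    using \<open>y \<in> isolated_points X - {x}\<close>
    by (auto simp: isolated_points_def card_of_space_def openin_subtopology)
qed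

lemma homeomorphic_space_isolated_points_eqpoll:
  assumes "X homeomorphic_space Y"
  shows "isolated_points X \<approx> isolated_points Y"
proof -
  obtain f where f: "homeomorphic_map X Y f"
    using assms homeomorphic_space by blast
  have image: "f ` topspace X = topspace Y"
    using f by (rule homeomorphic_imp_surjective_map)
  have "bij_betw f (isolated_points X) (isolated_points Y)"
  proof (rule bij_betw_imageI)
    show "inj_on f (isolated_points X)"
      using homeomorphic_imp_injective_map[OF f] isolated_points_subset_topspace
      by (rule inj_on_subset)
    show "f ` isolated_points X = isolated_points Y"
      using image homeomorphic_map_openness_eq[OF f]
      by (auto simp: isolated_points_def)
  qed
  then show ?thesis
    unfolding eqpoll_def by blast
qed

lemma same_deck_sym: "same_deck X Z \<Longrightarrow> same_deck Z X"
  unfolding same_deck_def by (meson homeomorphic_space_sym)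

lemma same_deck_punctures_matched:
  assumes "t1_space X" "t1_space Z" "same_deck X Z"
  shows "punctures_matched (topspace X) (isolated_points X) (topspace Z) (isolated_points Z)"
  unfolding punctures_matched_def
proof
  fix x assume "x \<in> topspace X"
  then obtain z where z: "z \<in> topspace Z"
    and homeo: "card_of_space X x homeomorphic_space card_of_space Z z"
    using assms(3) unfolding same_deck_def by blast
  have "isolated_points X - {x} \<approx> isolated_points Z - {z}"
    using homeomorphic_space_isolated_points_eqpoll[OF homeo]
    by (simp add: isolated_points_card_of_space assms)
  moreover have "topspace X - {x} = {} \<longleftrightarrow> topspace Z - {z} = {}"
    using homeomorphic_empty_space[OF homeo]
    unfolding card_of_space_def null_topspace_iff_trivial[symmetric] topspace_subtopology
    by blast
  ultimately show "\<exists>z\<in>topspace Z. isolated_points X - {x} \<approx> isolated_points Z - {z} \<and>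
                     (topspace X - {x} = {} \<longleftrightarrow> topspace Z - {z} = {})"
    using z by blast
qed

lemma infinite_Diff_singleton_eqpoll:
  assumes "infinite A"
  shows "A - {x} \<approx> A"
proof (cases "x \<in> A")
  case True
  have "insert x (A - {x}) \<approx> A - {x}"
    using assms by (intro infinite_insert_eqpoll) simp
  then show ?thesis
    using True by (simp add: insert_absorb eqpoll_sym)
qed simp

lemma punctures_matched_infinite_eqpoll:
  assumes "punctures_matched S A T B" "A \<subseteq> S" "infinite A"
  shows "A \<approx> B"
proof -
  obtain x where "x \<in> A"
    using assms(3) by (metis finite.emptyI ex_in_conv)
  then obtain z where punctured: "A - {x} \<approx> B - {z}"
    using assms(1,2) punctures_matchedE by (metis subsetD)
  then have "infinite B"
    using assms(3) eqpoll_finite_iff by fastforce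
  have "A \<approx> A - {x}"
    using infinite_Diff_singleton_eqpoll[OF assms(3)] by (rule eqpoll_sym)
  also have "\<dots> \<approx> B - {z}"
    by (fact punctured)
  also have "\<dots> \<approx> B"
    using \<open>infinite B\<close> by (rule infinite_Diff_singleton_eqpoll)
  finally show ?thesis .
qed

lemma punctures_matched_finite_card_le:
  assumes matched: "punctures_matched S A T B" and "A \<subseteq> S"
    and "finite A" "finite B" "A \<noteq> {}"
    and singleton: "\<And>b. T = {b} \<Longrightarrow> B = {b}"
  shows "card B \<le> card A \<and> B \<noteq> {}"
proof -
  obtain x where x: "x \<in> A"
    using assms(5) by blast
  with \<open>A \<subseteq> S\<close> have "x \<in> S"
    by blast
  then obtain z where z: "z \<in> T" and punctured: "A - {x} \<approx> B - {z}"
    and empty: "S - {x} = {} \<longleftrightarrow> T - {z} = {}"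
    by (rule punctures_matchedE[OF matched])
  have "card B \<le> Suc (card (B - {z}))"
    using \<open>finite B\<close> by (cases "z \<in> B") (simp_all add: card_Suc_Diff1)
  also have "card (B - {z}) = card (A - {x})"
    using punctured \<open>finite A\<close> \<open>finite B\<close> by (simp add: eqpoll_iff_card)
  also have "Suc (card (A - {x})) = card A"
    using \<open>finite A\<close> x by (rule card_Suc_Diff1)
  finally have "card B \<le> card A" .
  moreover have "B \<noteq> {}"
  proof
    assume "B = {}"
    then have "A - {x} = {}"
      using punctured by simp
    then have "A = {x}"
      using x by blast
    show False
    proof (cases "S = {x}")
      case True
      then have "T = {z}"
        using empty z by blast
      then show False
        using singleton \<open>B = {}\<close> by blast
    next
      case False
      then obtain x' where "x' \<in> S" "x' \<noteq> x"
        using x \<open>A \<subseteq> S\<close> by blast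
      then obtain z' where "A - {x'} \<approx> B - {z'}"
        using punctures_matchedE[OF matched] by metis
      then have "A - {x'} = {}"
        using \<open>B = {}\<close> by simp
      then show False
        using \<open>A = {x}\<close> \<open>x' \<noteq> x\<close> by blast
    qed
  qed
  ultimately show ?thesis by blast
qed

lemma eqpoll_if_punctures_matched:
  assumes "punctures_matched S A T B" "punctures_matched T B S A"
    and "A \<subseteq> S" "B \<subseteq> T"
    and "\<And>a. S = {a} \<Longrightarrow> A = {a}" "\<And>b. T = {b} \<Longrightarrow> B = {b}"
  shows "A \<approx> B"
proof (cases "finite A \<and> finite B")
  case True
  then have "card A = card B"
    using punctures_matched_finite_card_le[OF assms(1,3) _ _ _ assms(6)]
      punctures_matched_finite_card_le[OF assms(2,4) _ _ _ assms(5)]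
    by (cases "A = {}"; cases "B = {}") auto
  then show ?thesis
    using True eqpoll_iff_card by blast
next
  case False
  then show ?thesis
    using punctures_matched_infinite_eqpoll[OF assms(1,3)]
      punctures_matched_infinite_eqpoll[OF assms(2,4)] eqpoll_sym by blast
qed

theorem theorem4p3:
  shows "(\<forall>(X::'a topology) (Z::'b topology).
            t1_space X \<and> t1_space Z \<and> same_deck X Z \<longrightarrow>
            isolated_points X \<approx> isolated_points Z)
       \<and> (\<forall>X::'a topology.
            t1_space X \<and> (\<nexists>a. topspace X = {a}) \<and>
            (\<forall>x\<in>topspace X. isolated_points (card_of_space X x) = {}) \<longrightarrow>
            isolated_points X = {})"
proof (intro conjI allI impI; elim conjE)
  fix X :: "'a topology" and Z :: "'b topology"
  assume X: "t1_space X" and Z: "t1_space Z" and deck: "same_deck X Z"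
  show "isolated_points X \<approx> isolated_points Z"
    by (rule eqpoll_if_punctures_matched[OF same_deck_punctures_matched[OF X Z deck]
          same_deck_punctures_matched[OF Z X same_deck_sym[OF deck]]
          isolated_points_subset_topspace isolated_points_subset_topspace
          isolated_points_singleton_space isolated_points_singleton_space])
next
  fix X :: "'a topology"
  assume "t1_space X" "\<nexists>a. topspace X = {a}"
    and no_isolated: "\<forall>x\<in>topspace X. isolated_points (card_of_space X x) = {}"
  show "isolated_points X = {}"
  proof (rule ccontr)
    assume "isolated_points X \<noteq> {}"
    then obtain a where a: "a \<in> isolated_points X" by blast
    then have "a \<in> topspace X"
      by (rule subsetD[OF isolated_points_subset_topspace])
    moreover have "topspace X \<noteq> {a}"
      using \<open>\<nexists>a. topspace X = {a}\<close> by blast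
    ultimately obtain b where "b \<in> topspace X" "b \<noteq> a"
      by blast
    then show False
      using a no_isolated isolated_points_card_of_space[OF \<open>t1_space X\<close>, of b] by blast
  qed
qed

end
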